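(* For each $n\geq1$ let $\mathcal P_n$ be a polytope in $\mathbb R^k$ with $\mathcal P_{n+1}\subseteq\mathcal P_n$ for all $n$. Let $\mathcal P:=\bigcap_n\mathcal P_n$ and let $p$ be an extreme point of $\mathcal P$. Then for each $n$ there exists a vertex $p_n$ of $\mathcal P_n$ such that $\lim_{n\to\infty}p_n=p$.
   Context: A polytope is the convex hull of finitely many points of $\mathbb R^k$; its vertices are its extreme points. *)

theory Defs
  imports "HOL-Analysis.Analysis"
begin

end

theory Submission
  imports Defs
begin

text \<open>Only compactness and convexity of the polytopes matter. As \<open>p\<close> is an extreme point
of the compact convex set \<open>Q = \<Inter>n. P n\<close>, it lies outside the convex hull of the points of \<open>Q\<close>
at distance \<open>\<ge> \<epsilon>\<close> from \<open>p\<close>; a hyperplane separating the two cuts off a cap of \<open>Q\<close> around \<open>p\<close>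
inside the \<open>\<epsilon>\<close>-ball. By compactness, for large \<open>n\<close> the closed halfspace containing \<open>p\<close> also
meets \<open>P n\<close> only inside that ball. Since \<open>p \<in> P n\<close> and \<open>P n\<close> is the convex hull of its
vertices, some vertex lies in that halfspace, hence within \<open>\<epsilon>\<close> of \<open>p\<close>.\<close>

lemma extreme_point_small_cap:
  fixes Q :: "'a::euclidean_space set"
  assumes "compact Q" "convex Q" "p extreme_point_of Q" "e > 0"
  obtains a b where "inner a p < b" "Q \<subseteq> ball p e \<union> {x. inner a x > b}"
proof -
  define K where "K = convex hull (Q - ball p e)"
  have "compact K"
    unfolding K_def using assms(1) by (intro compact_convex_hull compact_diff) auto
  have "p \<notin> K"
  proof
    assume "p \<in> K"
    have "K \<subseteq> Q" unfolding K_def using assms(2) by (simp add: hull_minimal)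
    with assms(3) \<open>p \<in> K\<close> have "p extreme_point_of K"
      unfolding extreme_point_of_def by blast
    then have "p \<in> Q - ball p e"
      unfolding K_def by (rule extreme_point_of_convex_hull)
    with assms(4) show False by simp
  qed
  then obtain a b where "inner a p < b" "\<forall>x\<in>K. inner a x > b"
    using separating_hyperplane_closed_point[of K p] \<open>compact K\<close>
    by (auto simp: K_def compact_imp_closed)
  moreover have "Q - ball p e \<subseteq> K" unfolding K_def by (rule hull_subset)
  ultimately show thesis by (intro that) auto
qed

lemma extreme_point_inner_le:
  fixes S :: "'a::euclidean_space set"
  assumes "compact S" "convex S" "p \<in> S"
  obtains v where "v extreme_point_of S" "inner a v \<le> inner a p"
proof -
  have "\<not> {v. v extreme_point_of S} \<subseteq> {x. inner a x > inner a p}"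
  proof
    assume "{v. v extreme_point_of S} \<subseteq> {x. inner a x > inner a p}"
    then have "convex hull {v. v extreme_point_of S} \<subseteq> {x. inner a x > inner a p}"
      by (simp add: convex_halfspace_gt hull_minimal)
    then show False
      using Krein_Milman_Minkowski[OF assms(1,2)] assms(3) by auto
  qed
  then obtain v where "v extreme_point_of S" "\<not> inner a v > inner a p" by blast
  with that show thesis by (simp add: not_less)
qed

lemma decseq_compact_eventually_subset:
  fixes S :: "nat \<Rightarrow> 'a::heine_borel set"
  assumes "decseq S" "\<And>n. compact (S n)" "open U" "\<Inter>(range S) \<subseteq> U"
  shows "\<forall>\<^sub>F n in sequentially. S n \<subseteq> U"
proof -
  have "\<exists>N. S N - U = {}"
  proof (rule ccontr)
    assume "\<nexists>N. S N - U = {}"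
    then have "\<Inter>(range (\<lambda>n. S n - U)) \<noteq> {}"
      using assms(1) by (intro compact_nest compact_diff assms(2,3)) (auto simp: decseq_def)
    with assms(4) show False by blast
  qed
  then obtain N where "S N \<subseteq> U" by blast
  with assms(1) show ?thesis
    unfolding eventually_sequentially decseq_def by (meson order_trans)
qed

lemma extreme_points_eventually_near:
  fixes S :: "nat \<Rightarrow> 'a::euclidean_space set"
  assumes "decseq S" "\<And>n. compact (S n)" "\<And>n. convex (S n)"
    and "p extreme_point_of \<Inter>(range S)" "e > 0"
  shows "\<forall>\<^sub>F n in sequentially. \<exists>v. v extreme_point_of S n \<and> dist v p < e"
proof -
  have "compact (\<Inter>(range S))" "convex (\<Inter>(range S))"
    using assms(2,3) by (auto intro: compact_Inter convex_Inter)
  then obtain a b where ab: "inner a p < b" "\<Inter>(range S) \<subseteq> ball p e \<union> {x. inner a x > b}"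
    using extreme_point_small_cap assms(4,5) by blast
  have "\<forall>\<^sub>F n in sequentially. S n \<subseteq> ball p e \<union> {x. inner a x > b}"
    using assms(1,2) ab(2) by (intro decseq_compact_eventually_subset open_Un open_halfspace_gt) auto
  then show ?thesis
  proof (rule eventually_mono)
    fix n assume cap: "S n \<subseteq> ball p e \<union> {x. inner a x > b}"
    have "p \<in> S n" using assms(4) by (auto simp: extreme_point_of_def)
    then obtain v where v: "v extreme_point_of S n" "inner a v \<le> inner a p"
      using extreme_point_inner_le assms(2,3) by blast
    then have "v \<in> ball p e" using cap ab(1) by (auto simp: extreme_point_of_def)
    with v show "\<exists>v. v extreme_point_of S n \<and> dist v p < e"
      by (auto simp: dist_commute)
  qed
qed

lemma LIMSEQ_select_eventually_near:
  fixes T :: "nat \<Rightarrow> 'a::metric_space set"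
  assumes "\<And>n. T n \<noteq> {}"
    and "\<And>e. e > 0 \<Longrightarrow> \<forall>\<^sub>F n in sequentially. \<exists>v\<in>T n. dist v p < e"
  shows "\<exists>q. (\<forall>n. q n \<in> T n) \<and> q \<longlonglongrightarrow> p"
proof -
  have "\<exists>v\<in>T n. dist v p < infdist p (T n) + inverse (Suc n)" for n
  proof (rule ccontr)
    assume far: "\<not> ?thesis"
    have "infdist p (T n) + inverse (Suc n) \<le> infdist p (T n)"
      unfolding infdist_notempty[OF assms(1)]
    proof (rule cINF_greatest)
      fix v assume "v \<in> T n"
      with far show "(INF v\<in>T n. dist p v) + inverse (Suc n) \<le> dist p v"
        unfolding infdist_notempty[OF assms(1)] by (metis dist_commute not_less)
    qed (rule assms(1))
    then show False by simp
  qed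
  then obtain q where q: "\<And>n. q n \<in> T n"
    "\<And>n. dist (q n) p < infdist p (T n) + inverse (Suc n)"
    by metis
  have "q \<longlonglongrightarrow> p"
  proof (rule tendstoI)
    fix e :: real assume "e > 0"
    have "\<forall>\<^sub>F n in sequentially. inverse (real (Suc n)) < e / 2"
      by (rule order_tendstoD(2)[OF LIMSEQ_inverse_real_of_nat]) (use \<open>e > 0\<close> in simp)
    moreover have "\<forall>\<^sub>F n in sequentially. \<exists>v\<in>T n. dist v p < e / 2"
      using \<open>e > 0\<close> by (intro assms(2)) simp
    ultimately show "\<forall>\<^sub>F n in sequentially. dist (q n) p < e"
    proof eventually_elim
      case (elim n)
      then obtain v where "v \<in> T n" "dist v p < e / 2" by blast
      then have "infdist p (T n) < e / 2" by (metis dist_commute infdist_le le_less_trans)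
      with q(2)[of n] elim(1) show ?case by simp
    qed
  qed
  with q(1) show ?thesis by blast
qed

theorem extreme_point_of_decseq_Inter_limit:
  fixes S :: "nat \<Rightarrow> 'a::euclidean_space set"
  assumes "decseq S" "\<And>n. compact (S n)" "\<And>n. convex (S n)"
    and "p extreme_point_of \<Inter>(range S)"
  shows "\<exists>q. (\<forall>n. q n extreme_point_of S n) \<and> q \<longlonglongrightarrow> p"
proof -
  have "{v. v extreme_point_of S n} \<noteq> {}" for n
  proof -
    have "p \<in> S n" using assms(4) by (auto simp: extreme_point_of_def)
    then show ?thesis using extreme_point_exists_convex assms(2,3) by blast
  qed
  then show ?thesis
    using LIMSEQ_select_eventually_near[of "\<lambda>n. {v. v extreme_point_of S n}" p]
      extreme_points_eventually_near[OF assms] by auto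
qed

theorem lemma1:
  fixes P :: "nat \<Rightarrow> 'a::euclidean_space set" and p :: 'a
  assumes "\<And>n. n \<ge> 1 \<Longrightarrow> polytope (P n)"
    and "\<And>n. n \<ge> 1 \<Longrightarrow> P (Suc n) \<subseteq> P n"
    and "p extreme_point_of (\<Inter>n\<in>{1..}. P n)"
  shows "\<exists>q :: nat \<Rightarrow> 'a. (\<forall>n\<ge>1. q n extreme_point_of (P n)) \<and> q \<longlonglongrightarrow> p"
proof -
  define S where "S n = P (Suc n)" for n
  have "decseq S" using assms(2) by (simp add: S_def decseq_Suc_iff)
  moreover have "compact (S n)" "convex (S n)" for n
    using assms(1)[of "Suc n"] by (auto simp: S_def polytope_imp_compact polytope_imp_convex)
  moreover have "\<Inter>(range S) = (\<Inter>n\<in>{1..}. P n)"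
  proof -
    have "{1..} = range Suc" by (auto simp: image_iff dest: Suc_le_D)
    then show ?thesis by (simp add: S_def image_comp)
  qed
  ultimately have "\<exists>q. (\<forall>n. q n extreme_point_of S n) \<and> q \<longlonglongrightarrow> p"
    using assms(3) by (intro extreme_point_of_decseq_Inter_limit) simp_all
  then obtain q where q: "\<And>n. q n extreme_point_of S n" "q \<longlonglongrightarrow> p" by blast
  have "(\<lambda>n. q (n - 1)) \<longlonglongrightarrow> p"
    using q(2) by (subst filterlim_sequentially_Suc[symmetric]) simp
  moreover have "q (n - 1) extreme_point_of P n" if "n \<ge> 1" for n
    using q(1)[of "n - 1"] that by (simp add: S_def)
  ultimately show ?thesis by (intro exI[of _ "\<lambda>n. q (n - 1)"]) simp
qed

end
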